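(* There exists an infinite family of tries $\mathcal T$ with $n$ nodes (for arbitrarily large $n$) for which $r=\Theta(n\mathcal H_0(\mathcal T))=\Theta(n)$, where $r$ is the number of XBWT runs of $\mathcal T$.
   Context: A trie over a finite totally ordered alphabet $\Sigma$ is a rooted ordered tree with edges labeled by symbols of $\Sigma$ such that edges leaving the same node have distinct labels and siblings are ordered by their incoming labels. $n_c$ is the number of edges labeled $c$ and $out(u)$ the set of labels of edges leaving $u$. Logs base 2, $0\log(x/0)=0$. $\mathcal H_0(\mathcal T)=\sum_{c\in\Sigma}\left[\frac{n_c}{n}\log\frac{n}{n_c}+\frac{n-n_c}{n}\log\frac{n}{n-n_c}\right]$. Let $u_1,\dots,u_n$ be the nodes sorted co-lexicographically (right-to-left comparison, $\epsilon$ smallest) by the root-to-node path label. An index $i\in[n]$ is a $c$-run break if $c\in out(u_i)$ and either $i=n$ or $c\notin out(u_{i+1})$; $r=\sum_{c\in\Sigma}r_c$ where $r_c$ is the number of $c$-run breaks. *)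

theory Defs
  imports Main "HOL.Transcendental"
begin

text \<open>A trie over a finite totally ordered alphabet Alph is represented by the set of
  root-to-node path labels of its nodes: a finite, prefix-closed set of words over Alph
  containing the empty word (the root). Edges correspond to nonempty nodes; the label of
  the edge entering node w is last w. Siblings are automatically distinct-labelled and
  ordered by their labels.\<close>

definition is_trie :: "'a::linorder set \<Rightarrow> 'a list set \<Rightarrow> bool" where
  "is_trie Alph T \<longleftrightarrow> finite Alph \<and> finite T \<and> [] \<in> T \<and>
     (\<forall>w\<in>T. set w \<subseteq> Alph) \<and> (\<forall>w c. w @ [c] \<in> T \<longrightarrow> w \<in> T)"

definition num_nodes :: "'a list set \<Rightarrow> nat" where
  "num_nodes T = card T"

definition num_edges_lab :: "'a list set \<Rightarrow> 'a \<Rightarrow> nat" where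
  "num_edges_lab T c = card {w \<in> T. w \<noteq> [] \<and> last w = c}"

definition out :: "'a list set \<Rightarrow> 'a list \<Rightarrow> 'a set" where
  "out T u = {c. u @ [c] \<in> T}"

definition ent_term :: "nat \<Rightarrow> nat \<Rightarrow> real" where
  "ent_term n k = (if k = 0 then 0 else real k / real n * log 2 (real n / real k))"

definition H0 :: "'a set \<Rightarrow> 'a list set \<Rightarrow> real" where
  "H0 Alph T = (\<Sum>c\<in>Alph. ent_term (num_nodes T) (num_edges_lab T c)
                      + ent_term (num_nodes T) (num_nodes T - num_edges_lab T c))"

text \<open>Co-lexicographic order: compare right-to-left; the empty word is smallest
  (a proper suffix precedes the longer word).\<close>
definition colex_less :: "'a::linorder list \<Rightarrow> 'a list \<Rightarrow> bool" where
  "colex_less u v \<longleftrightarrow> (rev u, rev v) \<in> lexord {(a, b). a < b}"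

text \<open>The nodes u_1, ..., u_n sorted co-lexicographically (0-indexed list).\<close>
definition colex_sorted :: "'a::linorder list set \<Rightarrow> 'a list list" where
  "colex_sorted T = (THE xs. set xs = T \<and> sorted_wrt colex_less xs)"

definition run_breaks :: "'a::linorder list set \<Rightarrow> 'a \<Rightarrow> nat" where
  "run_breaks T c = (let xs = colex_sorted T; n = length xs in
     card {i. i < n \<and> c \<in> out T (xs ! i) \<and> (i = n - 1 \<or> c \<notin> out T (xs ! (i + 1)))})"

definition xbwt_runs :: "'a::linorder set \<Rightarrow> 'a list set \<Rightarrow> nat" where
  "xbwt_runs Alph T = (\<Sum>c\<in>Alph. run_breaks T c)"

end

theory Submission
  imports Defs
begin

text \<open>The witnesses are combs: a path of 0-edges of length 2m+1, with a 1-leaf hanging off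
  every even-depth path node. In co-lexicographic order the path nodes come first, by depth,
  followed by the leaves. The nodes with an outgoing 0-edge are consecutive, giving a single
  0-run, while the nodes with an outgoing 1-edge alternate with those without, giving m+1
  1-runs; so r = m+2 for n = 3m+3 nodes. Both labels occur on a constant fraction of the
  edges, hence H0 lies between two positive constants, and both r and n H0 are
  proportional to n.\<close>

lemma colex_less_irrefl: "\<not> colex_less u u"
  unfolding colex_less_def by (rule lexord_irreflexive) auto

lemma colex_less_trans: "colex_less u v \<Longrightarrow> colex_less v w \<Longrightarrow> colex_less u w"
  unfolding colex_less_def by (erule lexord_trans) (auto simp: trans_def)

lemma colex_less_snoc_iff: "colex_less (u @ [c]) (v @ [c]) \<longleftrightarrow> colex_less u v"
  unfolding colex_less_def by simp

lemma colex_less_replicate: "i < j \<Longrightarrow> colex_less (replicate i x) (replicate j x)"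
proof -
  assume "i < j"
  then have "replicate j x = replicate i x @ x # replicate (j - i - 1) x"
    by (simp flip: replicate_add replicate_Suc)
  then show ?thesis
    unfolding colex_less_def rev_replicate by (simp add: lexord_append_rightI)
qed

lemma colex_less_replicate_snoc: "x < y \<Longrightarrow> colex_less (replicate i x) (w @ [y])"
  unfolding colex_less_def rev_replicate rev_append by (cases i) auto

lemma sorted_wrt_colex_less_distinct: "sorted_wrt colex_less xs \<Longrightarrow> distinct xs"
  by (induction xs) (auto simp: colex_less_irrefl)

lemma sorted_wrt_colex_less_unique:
  "sorted_wrt colex_less xs \<Longrightarrow> sorted_wrt colex_less ys \<Longrightarrow> set xs = set ys \<Longrightarrow> xs = ys"
proof (induction xs arbitrary: ys)
  case Nil
  then show ?case by simp
next
  case (Cons x xs)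
  then obtain y ys' where ys: "ys = y # ys'" by (cases ys) auto
  have "x = y"
  proof (rule ccontr)
    assume "x \<noteq> y"
    then have "colex_less y x" "colex_less x y" using Cons.prems ys by auto
    then show False using colex_less_trans colex_less_irrefl by blast
  qed
  moreover have "set xs = set ys'"
    using Cons.prems ys \<open>x = y\<close> sorted_wrt_colex_less_distinct
    by (metis distinct.simps(2) list.set(2) insert_ident)
  ultimately show ?case using Cons ys by simp
qed

lemma colex_sorted_eqI: "sorted_wrt colex_less xs \<Longrightarrow> set xs = T \<Longrightarrow> colex_sorted T = xs"
  unfolding colex_sorted_def by (rule the_equality) (auto intro: sorted_wrt_colex_less_unique)

lemma
  assumes "sorted_wrt colex_less xs" "set xs = T"
  shows num_nodes_colex_sorted: "num_nodes T = length xs"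
    and run_breaks_colex_sorted: "run_breaks T c = card {i. i < length xs \<and> c \<in> out T (xs ! i) \<and>
      (i = length xs - 1 \<or> c \<notin> out T (xs ! (i + 1)))}"
  using assms distinct_card[OF sorted_wrt_colex_less_distinct]
  unfolding num_nodes_def run_breaks_def colex_sorted_eqI[OF assms] Let_def by auto

lemma ln_2_ge_half: "1/2 \<le> (ln 2 :: real)"
proof -
  have "1/2 \<le> exp (-1/2 :: real)"
    using exp_ge_add_one_self[of "-1/2 :: real"] by simp
  then have "ln (1/2) \<le> ln (exp (-1/2 :: real))"
    by (subst ln_le_cancel_iff) auto
  then show ?thesis by (simp add: ln_div)
qed

lemma ent_term_nonneg: "k \<le> n \<Longrightarrow> 0 \<le> ent_term n k"
  unfolding ent_term_def by simp

lemma ent_term_le_2: "ent_term n k \<le> 2"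
proof (cases "k = 0 \<or> n = 0")
  case False
  then have pos: "0 < real n / real k" "0 < real k / real n" by auto
  have "log 2 (real n / real k) \<le> (real n / real k - 1) / ln 2"
    unfolding log_def using ln_le_minus_one[OF pos(1)] by (simp add: divide_right_mono)
  then have "real k / real n * log 2 (real n / real k)
      \<le> real k / real n * ((real n / real k - 1) / ln 2)"
    using pos(2) by (rule mult_left_mono[OF _ less_imp_le])
  also have "\<dots> = (1 - real k / real n) / ln 2"
    using False by (simp add: field_simps)
  also have "\<dots> \<le> 1 / ln 2"
    using pos by (simp add: divide_right_mono)
  also have "\<dots> \<le> 2"
    using ln_2_ge_half by (simp add: field_simps)
  finally show ?thesis using False unfolding ent_term_def by simp
qed (auto simp: ent_term_def)

lemma ent_term_mult_self: "0 < k \<Longrightarrow> 0 < d \<Longrightarrow> ent_term (d * k) k = log 2 d / d"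
  unfolding ent_term_def by simp

lemma H0_le_card: "H0 Alph T \<le> 4 * real (card Alph)"
proof -
  have "H0 Alph T \<le> of_nat (card Alph) * 4"
    unfolding H0_def
    by (rule sum_bounded_above) (rule order_trans[OF add_mono[OF ent_term_le_2 ent_term_le_2]], simp)
  then show ?thesis by simp
qed

lemma num_edges_lab_le_num_nodes: "finite T \<Longrightarrow> num_edges_lab T c \<le> num_nodes T"
  unfolding num_edges_lab_def num_nodes_def by (rule card_mono) auto

lemma ent_term_le_H0:
  assumes "is_trie Alph T" "c \<in> Alph"
  shows "ent_term (num_nodes T) (num_edges_lab T c) \<le> H0 Alph T"
proof -
  have "finite Alph" "finite T" using assms(1) unfolding is_trie_def by auto
  then have summand_nonneg: "0 \<le> ent_term (num_nodes T) (num_edges_lab T a)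
      + ent_term (num_nodes T) (num_nodes T - num_edges_lab T a)" for a
    by (simp add: ent_term_nonneg num_edges_lab_le_num_nodes)
  have "ent_term (num_nodes T) (num_edges_lab T c) \<le> ent_term (num_nodes T) (num_edges_lab T c)
      + ent_term (num_nodes T) (num_nodes T - num_edges_lab T c)"
    by (simp add: ent_term_nonneg)
  also have "\<dots> \<le> H0 Alph T"
    unfolding H0_def using \<open>finite Alph\<close> assms(2) summand_nonneg by (intro member_le_sum)
  finally show ?thesis .
qed

lemma snoc_eq_replicate_iff:
  "w @ [c] = replicate i x \<longleftrightarrow> 0 < i \<and> c = x \<and> w = replicate (i - 1) x"
  by (cases i) (auto simp flip: replicate_append_same)

definition comb_trie :: "nat \<Rightarrow> nat list set" where
  "comb_trie m = (\<lambda>i. replicate i 0) ` {..2*m+1} \<union> (\<lambda>j. replicate (2*j) 0 @ [1]) ` {..m}"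

definition comb_colex :: "nat \<Rightarrow> nat list list" where
  "comb_colex m =
     map (\<lambda>i. replicate i 0) [0..<2*m+2] @ map (\<lambda>j. replicate (2*j) 0 @ [1]) [0..<m+1]"

lemma is_trie_comb_trie: "is_trie {0,1} (comb_trie m)"
  unfolding is_trie_def comb_trie_def by (auto simp: snoc_eq_replicate_iff)

lemma set_comb_colex: "set (comb_colex m) = comb_trie m"
proof -
  have "{..<2*m+2} = {..2*m+1}" "{..<m+1} = {..m}" by auto
  then show ?thesis
    unfolding comb_colex_def comb_trie_def by (simp only: set_append set_map set_upt atLeast0LessThan)
qed

lemma sorted_comb_colex: "sorted_wrt colex_less (comb_colex m)"
proof -
  have "sorted_wrt colex_less (map (\<lambda>i. replicate i (0::nat)) [0..<k])" for k
    unfolding sorted_wrt_map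
    by (rule sorted_wrt_mono_rel[OF _ sorted_wrt_upt]) (simp add: colex_less_replicate)
  moreover have "sorted_wrt colex_less (map (\<lambda>j. replicate (2*j) (0::nat) @ [1]) [0..<k])" for k
    unfolding sorted_wrt_map
    by (rule sorted_wrt_mono_rel[OF _ sorted_wrt_upt]) (simp add: colex_less_snoc_iff colex_less_replicate)
  ultimately show ?thesis
    unfolding comb_colex_def sorted_wrt_append by (simp add: colex_less_replicate_snoc del: upt_Suc)
qed

lemma length_comb_colex: "length (comb_colex m) = 3*m+3"
  unfolding comb_colex_def by simp

lemma nth_comb_colex_spine: "i < 2*m+2 \<Longrightarrow> comb_colex m ! i = replicate i 0"
  unfolding comb_colex_def by (simp add: nth_append del: upt_Suc)

lemma nth_comb_colex_leaf:
  assumes "2*m+2 \<le> i" "i < 3*m+3"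
  shows "comb_colex m ! i = replicate (2*(i-(2*m+2))) 0 @ [1]"
proof -
  have "[0..<m+1] ! (i - (2*m+2)) = i - (2*m+2)"
    using assms by (subst nth_upt) auto
  then show ?thesis using assms unfolding comb_colex_def by (simp add: nth_append del: upt_Suc)
qed

lemma num_nodes_comb_trie: "num_nodes (comb_trie m) = 3*m+3"
  using num_nodes_colex_sorted[OF sorted_comb_colex set_comb_colex] by (simp add: length_comb_colex)

lemma out_comb_trie_spine:
  "out (comb_trie m) (replicate i 0) = {c. i \<le> 2*m \<and> (c = 0 \<or> c = 1 \<and> even i)}"
  unfolding out_def comb_trie_def
  by (force simp: image_iff snoc_eq_replicate_iff elim!: evenE)

lemma one_notin_butlast_comb_trie: "w \<in> comb_trie m \<Longrightarrow> 1 \<notin> set (butlast w)"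
  unfolding comb_trie_def by (auto dest: in_set_butlastD)

lemma out_comb_trie_leaf: "out (comb_trie m) (replicate i 0 @ [1]) = {}"
proof -
  have "(replicate i 0 @ [1]) @ [c] \<notin> comb_trie m" for c
    using one_notin_butlast_comb_trie[of "(replicate i 0 @ [1]) @ [c]" m] by (auto simp: butlast_append)
  then show ?thesis unfolding out_def by simp
qed

lemma out_nth_comb_colex:
  assumes "i < 3*m+3"
  shows "out (comb_trie m) (comb_colex m ! i) = {c. i \<le> 2*m \<and> (c = 0 \<or> c = 1 \<and> even i)}"
proof (cases "i < 2*m+2")
  case True
  then show ?thesis by (simp add: nth_comb_colex_spine out_comb_trie_spine)
next
  case False
  then show ?thesis
    using assms unfolding nth_comb_colex_leaf[OF leI[OF False] assms] out_comb_trie_leaf by simp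
qed

lemma run_breaks_comb_trie_0: "run_breaks (comb_trie m) 0 = 1"
proof -
  have "{i. i < 3*m+3 \<and> 0 \<in> out (comb_trie m) (comb_colex m ! i) \<and>
      (i = 3*m+3 - 1 \<or> 0 \<notin> out (comb_trie m) (comb_colex m ! (i + 1)))} = {2*m}"
    using out_nth_comb_colex[of _ m] by auto
  then show ?thesis
    by (simp add: run_breaks_colex_sorted[OF sorted_comb_colex set_comb_colex] length_comb_colex)
qed

lemma run_breaks_comb_trie_1: "run_breaks (comb_trie m) 1 = m+1"
proof -
  have "{i. i < 3*m+3 \<and> 1 \<in> out (comb_trie m) (comb_colex m ! i) \<and>
      (i = 3*m+3 - 1 \<or> 1 \<notin> out (comb_trie m) (comb_colex m ! (i + 1)))} = (\<lambda>j. 2*j) ` {..m}"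
    using out_nth_comb_colex[of _ m] by (auto elim!: evenE)
  moreover have "card ((\<lambda>j. 2*j) ` {..m}) = m+1"
    by (subst card_image) (auto simp: inj_on_def)
  ultimately show ?thesis
    by (simp add: run_breaks_colex_sorted[OF sorted_comb_colex set_comb_colex] length_comb_colex)
qed

lemma xbwt_runs_comb_trie: "xbwt_runs {0,1} (comb_trie m) = m+2"
  unfolding xbwt_runs_def using run_breaks_comb_trie_0[of m] run_breaks_comb_trie_1[of m] by simp

lemma num_edges_lab_comb_trie_1: "num_edges_lab (comb_trie m) 1 = m+1"
proof -
  have "{w \<in> comb_trie m. w \<noteq> [] \<and> last w = 1} = (\<lambda>j. replicate (2*j) 0 @ [1]) ` {..m}"
    unfolding comb_trie_def by auto
  moreover have "inj_on (\<lambda>j. replicate (2*j) (0::nat) @ [1]) {..m}"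
    by (auto simp: inj_on_def dest: arg_cong[of _ _ length])
  ultimately show ?thesis unfolding num_edges_lab_def by (simp add: card_image)
qed

lemma H0_comb_trie_ge: "1/3 \<le> H0 {0,1} (comb_trie m)"
proof -
  have "1/3 \<le> log 2 3 / (3::real)" by simp
  also have "\<dots> = ent_term (3 * (m+1)) (m+1)" using ent_term_mult_self[of "m+1" 3] by simp
  also have "\<dots> = ent_term (num_nodes (comb_trie m)) (num_edges_lab (comb_trie m) 1)"
    by (simp only: num_nodes_comb_trie num_edges_lab_comb_trie_1 distrib_left mult_1_right)
  also have "\<dots> \<le> H0 {0,1} (comb_trie m)"
    by (rule ent_term_le_H0[OF is_trie_comb_trie]) simp
  finally show ?thesis .
qed

lemma H0_comb_trie_le: "H0 {0,1} (comb_trie m) \<le> 8"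
  using H0_le_card[of "{0,1::nat}" "comb_trie m"] by simp

lemma xbwt_runs_comb_trie_bounds:
  fixes m :: nat
  defines "n \<equiv> real (num_nodes (comb_trie m))"
    and "r \<equiv> real (xbwt_runs {0,1} (comb_trie m))"
    and "h \<equiv> H0 {0,1} (comb_trie m)"
  shows "1/24 * n \<le> r \<and> r \<le> 3 * n \<and> 1/24 * (n * h) \<le> r \<and> r \<le> 3 * (n * h)"
proof -
  have n: "n = 3 * real m + 3"
    unfolding n_def num_nodes_comb_trie by simp
  have r: "r = real m + 2"
    unfolding r_def using xbwt_runs_comb_trie[of m] by simp
  have h: "1/3 \<le> h" "h \<le> 8"
    unfolding h_def by (rule H0_comb_trie_ge, rule H0_comb_trie_le)
  have "n * (1/3) \<le> n * h" "n * h \<le> n * 8"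
    using h n by (intro mult_left_mono; simp)+
  then show ?thesis using n r by linarith
qed

theorem proposition4:
  shows "\<exists>(Alph :: nat set) (T :: nat \<Rightarrow> nat list set).
     (\<forall>k. is_trie Alph (T k)) \<and>
     (\<forall>N. \<exists>k. num_nodes (T k) \<ge> N) \<and>
     (\<exists>c1 c2 :: real. c1 > 0 \<and> c2 > 0 \<and>
        (\<forall>k. c1 * real (num_nodes (T k)) \<le> real (xbwt_runs Alph (T k)) \<and>
             real (xbwt_runs Alph (T k)) \<le> c2 * real (num_nodes (T k)) \<and>
             c1 * (real (num_nodes (T k)) * H0 Alph (T k)) \<le> real (xbwt_runs Alph (T k)) \<and>
             real (xbwt_runs Alph (T k)) \<le> c2 * (real (num_nodes (T k)) * H0 Alph (T k))))"
proof (intro exI[of _ "{0,1}"] exI[of _ comb_trie] conjI allI, goal_cases)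
  case (1 k)
  show ?case by (rule is_trie_comb_trie)
next
  case (2 N)
  show ?case by (rule exI[of _ N]) (simp add: num_nodes_comb_trie)
next
  case 3
  show ?case
    by (rule exI[of _ "1/24"], rule exI[of _ 3]) (use xbwt_runs_comb_trie_bounds in simp)
qed

end
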